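(* Let $I=(i_1<i_2<\cdots<i_r)$ be strictly increasing with $r\geq1$, and let $\chi_I=\sum_{\varepsilon\in\{0,1\}^r}a_I^\varepsilon w_I^\varepsilon$ with $a_I^\varepsilon\in\mathcal B$. Then: (A) if $\beta(\chi_I)=\gamma(\chi_I)$, then $\chi_I=aS_I$ for some $a\in\mathcal B$; (B) if $\beta(\chi_I)=0$, then $\chi_I=0$; (C) if $\beta(\chi_I)=\delta(\chi_I)$, then $\chi_I\in\mathcal B\otimes1\otimes\land W$.
   Context: $\mathcal B$ is a graded commutative rational algebra and $W$ a graded rational vector space concentrated in odd degrees with basis $\{w_i\}$ indexed by a totally ordered set. In $\mathcal B\otimes\land W\otimes\land W$ write $w_i^0=w_i=1\otimes w_i\otimes1$, $w_i^1=w'_i=1\otimes1\otimes w_i$, $w_I^\varepsilon=w_{i_1}^{\epsilon_1}\cdots w_{i_r}^{\epsilon_r}$, and $S_I=(w_{i_1}+w'_{i_1})\cdots(w_{i_r}+w'_{i_r})$. In $\mathcal B\otimes\land W^{\otimes3}$ write $w,w',w''$ for $w$ in the three copies. Algebra maps $\alpha,\beta,\gamma,\delta\colon\mathcal B\otimes\land W\otimes\land W\to\mathcal B\otimes\land W\otimes\land W\otimes\land W$, identity on $\mathcal B$: $\alpha(w)=w,\alpha(w')=w'$; $\beta(w)=w+w',\beta(w')=w''$; $\gamma(w)=w,\gamma(w')=w'+w''$; $\delta(w)=w',\delta(w')=w''$. *)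

theory Defs
  imports Main "HOL-Library.Product_Lexorder"
begin

text \<open>B is given by its underlying ring together with the family of homogeneous
components Bd n (n = degree).\<close>

definition graded_comm_rat_alg :: "(nat \<Rightarrow> 'b::ring_1 set) \<Rightarrow> bool" where
  "graded_comm_rat_alg Bd \<longleftrightarrow>
     (\<forall>n. 0 \<in> Bd n \<and> (\<forall>x\<in>Bd n. \<forall>y\<in>Bd n. x + y \<in> Bd n \<and> - x \<in> Bd n)) \<and>
     1 \<in> Bd 0 \<and>
     (\<forall>p q. \<forall>x\<in>Bd p. \<forall>y\<in>Bd q. x * y \<in> Bd (p + q)) \<and>
     (\<forall>p q. \<forall>x\<in>Bd p. \<forall>y\<in>Bd q. x * y = (-1) ^ (p * q) * (y * x)) \<and>
     (\<forall>x. \<exists>!c::nat \<Rightarrow> 'b. finite {n. c n \<noteq> 0} \<and> (\<forall>n. c n \<in> Bd n) \<and>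
                         x = (\<Sum>n\<in>{n. c n \<noteq> 0}. c n)) \<and>
     (\<forall>n::nat. n > 0 \<longrightarrow> (\<exists>u\<in>Bd 0. of_nat n * u = 1 \<and> u * of_nat n = 1))"

text \<open>A generator (i, c) stands for the copy number c of w_i:
  (i,0) = w_i, (i,1) = w'_i, (i,2) = w''_i.
  B \<otimes> \<Lambda>W \<otimes> ... \<otimes> \<Lambda>W (graded tensor product) is the free left B-module on
  monomials, a monomial being a finite set of generators multiplied in increasing
  order (lexicographic order on (i,c)). An element is its coefficient function
  (finite support; infinite sets get coefficient 0).\<close>

type_synonym 'i gen = "'i \<times> nat"

definition ext_sgn :: "'i::linorder gen set \<Rightarrow> 'i gen set \<Rightarrow> int" where
  "ext_sgn S T = (-1) ^ card {(s, t). s \<in> S \<and> t \<in> T \<and> t < s}"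

definition ext_one :: "'i gen set \<Rightarrow> int" where
  "ext_one S = (if S = {} then 1 else 0)"

definition ext_gen :: "'i gen \<Rightarrow> 'i gen set \<Rightarrow> int" where
  "ext_gen g S = (if S = {g} then 1 else 0)"

definition ext_add :: "('i gen set \<Rightarrow> int) \<Rightarrow> ('i gen set \<Rightarrow> int) \<Rightarrow> 'i gen set \<Rightarrow> int" where
  "ext_add x y S = x S + y S"

definition ext_mul :: "('i::linorder gen set \<Rightarrow> int) \<Rightarrow> ('i gen set \<Rightarrow> int) \<Rightarrow> 'i gen set \<Rightarrow> int" where
  "ext_mul x y U = (if finite U then (\<Sum>S\<in>Pow U. ext_sgn S (U - S) * x S * y (U - S)) else 0)"

definition ext_prod :: "('i::linorder gen set \<Rightarrow> int) list \<Rightarrow> 'i gen set \<Rightarrow> int" where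
  "ext_prod xs = foldr ext_mul xs ext_one"

definition bscale :: "'b::ring_1 \<Rightarrow> ('i gen set \<Rightarrow> int) \<Rightarrow> 'i gen set \<Rightarrow> 'b" where
  "bscale b x S = b * of_int (x S)"

text \<open>Algebra map, identity on B, determined by images of generators:
  phi(\<Sum>_S x_S m_S) = \<Sum>_S x_S phi(m_S), phi(m_S) = product of images of generators
  of S in increasing order.  (Defined for finitely supported elements.)\<close>
definition alg_map :: "('i::linorder gen \<Rightarrow> ('i gen set \<Rightarrow> int)) \<Rightarrow> ('i gen set \<Rightarrow> 'b::ring_1)
                        \<Rightarrow> 'i gen set \<Rightarrow> 'b" where
  "alg_map img x U = (\<Sum>S\<in>{S. finite S \<and> x S \<noteq> 0}.
       x S * of_int (ext_prod (map img (sorted_list_of_set S)) U))"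

definition beta_img :: "'i gen \<Rightarrow> 'i gen set \<Rightarrow> int" where
  "beta_img g = (if snd g = 0 then ext_add (ext_gen (fst g, 0)) (ext_gen (fst g, 1))
                 else if snd g = 1 then ext_gen (fst g, 2) else (\<lambda>_. 0))"

definition gamma_img :: "'i gen \<Rightarrow> 'i gen set \<Rightarrow> int" where
  "gamma_img g = (if snd g = 0 then ext_gen (fst g, 0)
                 else if snd g = 1 then ext_add (ext_gen (fst g, 1)) (ext_gen (fst g, 2))
                 else (\<lambda>_. 0))"

definition delta_img :: "'i gen \<Rightarrow> 'i gen set \<Rightarrow> int" where
  "delta_img g = (if snd g = 0 then ext_gen (fst g, 1)
                 else if snd g = 1 then ext_gen (fst g, 2) else (\<lambda>_. 0))"

abbreviation beta_map :: "('i::linorder gen set \<Rightarrow> 'b::ring_1) \<Rightarrow> 'i gen set \<Rightarrow> 'b" where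
  "beta_map \<equiv> alg_map beta_img"
abbreviation gamma_map :: "('i::linorder gen set \<Rightarrow> 'b::ring_1) \<Rightarrow> 'i gen set \<Rightarrow> 'b" where
  "gamma_map \<equiv> alg_map gamma_img"
abbreviation delta_map :: "('i::linorder gen set \<Rightarrow> 'b::ring_1) \<Rightarrow> 'i gen set \<Rightarrow> 'b" where
  "delta_map \<equiv> alg_map delta_img"

text \<open>eps \<in> {0,1}^r is a bool list (True = 1 = primed copy).\<close>
definition wI :: "'i::linorder list \<Rightarrow> bool list \<Rightarrow> 'i gen set \<Rightarrow> int" where
  "wI I eps = ext_prod (map2 (\<lambda>i e. ext_gen (i, if e then 1 else 0)) I eps)"

definition SI :: "'i::linorder list \<Rightarrow> 'i gen set \<Rightarrow> int" where
  "SI I = ext_prod (map (\<lambda>i. ext_add (ext_gen (i, 0)) (ext_gen (i, 1))) I)"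

definition chiI :: "'i::linorder list \<Rightarrow> (bool list \<Rightarrow> 'b::ring_1) \<Rightarrow> 'i gen set \<Rightarrow> 'b" where
  "chiI I a S = (\<Sum>eps\<in>{eps. length eps = length I}. a eps * of_int (wI I eps S))"

text \<open>Membership in B \<otimes> 1 \<otimes> \<Lambda>W: only monomials in the primed generators occur.\<close>
definition in_B_1_LW :: "('i gen set \<Rightarrow> 'b::zero) \<Rightarrow> bool" where
  "in_B_1_LW x \<longleftrightarrow> (\<forall>S. x S \<noteq> 0 \<longrightarrow> (\<forall>g\<in>S. snd g = 1))"

end

(*
  Each generator image of beta, gamma, delta is a sum of copies w_i^(c), c in a set C, of a
  single w_i.  For i_1 < ... < i_r the product of such sums expands without signs into the sum
  of the monomials w_{i_1}^(c_1) ... w_{i_r}^(c_r) with c_k in C_k, and distinct eps give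
  disjoint sets of monomials.  Hence for phi among beta, gamma, delta the coefficient of
  phi(chi_I) at w_{i_1}^(t_1) ... w_{i_r}^(t_r) is a_I^eps for the unique eps with
  t_k in C(eps_k), or 0 if there is none.  For beta, the monomial with t_k = 2 where eps_k = 1
  and t_k in {0,1} otherwise reads off a_I^eps, whereas gamma has coefficient a_I^(1,...,1) at
  every monomial with all t_k nonzero, and delta has coefficient 0 at every monomial with
  some t_k = 0.
*)
theory Submission
  imports Defs
begin

lemma set_zip_eq_iff:
  assumes "distinct I" and "length xs = length I" and "length ys = length I"
  shows "set (zip I xs) = set (zip I ys) \<longleftrightarrow> xs = ys"
  using assms map_of_zip_inject[of xs I ys] map_of_inject_set[of "zip I xs" "zip I ys"] by auto

lemma sorted_list_of_set_set_zip:
  assumes "sorted_wrt (<) I"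
  shows "sorted_list_of_set (set (zip I xs)) = zip I xs"
proof -
  have "sorted_wrt (<) (zip I xs)"
    using assms by (auto simp: sorted_wrt_iff_nth_less less_prod_def)
  then show ?thesis
    by (simp add: sorted_list_of_set_sort_remdups strict_sorted_iff distinct_remdups_id sorted_sort_id)
qed

lemma list_all2_mem_singletons: "list_all2 (\<in>) us (map (\<lambda>x. {f x}) xs) \<longleftrightarrow> us = map f xs"
  by (induction xs arbitrary: us) (auto simp: list_all2_Cons2)

lemma list_all2_replicate_0_1_iff:
  "list_all2 (\<in>) us (replicate n {0, 1}) \<longleftrightarrow> (\<exists>eps. length eps = n \<and> us = map of_bool eps)"
proof
  assume us: "list_all2 (\<in>) us (replicate n {0, 1})"
  then have "length us = n"
    by (auto dest: list_all2_lengthD)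
  have "set us \<subseteq> {0, 1}"
  proof
    fix u assume "u \<in> set us"
    then obtain k where "k < length us" and "us ! k = u"
      by (auto simp: in_set_conv_nth)
    then show "u \<in> {0, 1}"
      using us by (auto simp: list_all2_conv_all_nth)
  qed
  then have "us = map of_bool (map (\<lambda>u. u = 1) us)"
    by (auto intro!: map_idI[symmetric])
  then show "\<exists>eps. length eps = n \<and> us = map of_bool eps"
    using \<open>length us = n\<close> by (intro exI[of _ "map (\<lambda>u. u = 1) us"]) simp
qed (auto simp: list_all2_conv_all_nth)

lemma list_all2_iff_eq_map:
  assumes "\<And>x y. x \<in> set xs \<Longrightarrow> R x y \<longleftrightarrow> y = f x"
  shows "list_all2 R xs ys \<longleftrightarrow> ys = map f xs"
  using assms by (induction xs arbitrary: ys) (auto simp: list_all2_Cons1)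

lemma finite_bool_lists_length: "finite {eps :: bool list. length eps = n}"
  using finite_lists_length_eq[of "UNIV :: bool set" n] by simp

(* The element \<Sum>c\<in>C. w_i^(c) *)
definition copies_sum :: "'i \<Rightarrow> nat set \<Rightarrow> 'i gen set \<Rightarrow> int" where
  "copies_sum i C S = of_bool (\<exists>c\<in>C. S = {(i, c)})"

lemma ext_gen_eq_copies_sum: "ext_gen (i, c) = copies_sum i {c}"
  by (auto simp: ext_gen_def copies_sum_def fun_eq_iff)

lemma ext_add_ext_gen_eq_copies_sum:
  "c \<noteq> d \<Longrightarrow> ext_add (ext_gen (i, c)) (ext_gen (i, d)) = copies_sum i {c, d}"
  by (auto simp: ext_add_def ext_gen_def copies_sum_def fun_eq_iff)

lemma beta_img_eq_copies_sum:
  "beta_img = (\<lambda>g. copies_sum (fst g) (if snd g = 0 then {0, 1} else if snd g = 1 then {2} else {}))"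
  by (auto simp: fun_eq_iff beta_img_def ext_add_def ext_gen_def copies_sum_def)

lemma gamma_img_eq_copies_sum:
  "gamma_img = (\<lambda>g. copies_sum (fst g) (if snd g = 0 then {0} else if snd g = 1 then {1, 2} else {}))"
  by (auto simp: fun_eq_iff gamma_img_def ext_add_def ext_gen_def copies_sum_def)

lemma delta_img_eq_copies_sum:
  "delta_img = (\<lambda>g. copies_sum (fst g) (if snd g = 0 then {1} else if snd g = 1 then {2} else {}))"
  by (auto simp: fun_eq_iff delta_img_def ext_gen_def copies_sum_def)

lemma ext_mul_copies_sum:
  assumes "finite U"
  shows "ext_mul (copies_sum i C) x U =
    (\<Sum>c\<in>{c\<in>C. (i, c) \<in> U}. ext_sgn {(i, c)} (U - {(i, c)}) * x (U - {(i, c)}))"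
proof -
  have "ext_mul (copies_sum i C) x U =
      (\<Sum>S\<in>(\<lambda>c. {(i, c)}) ` {c\<in>C. (i, c) \<in> U}. ext_sgn S (U - S) * x (U - S))"
    unfolding ext_mul_def if_P[OF assms]
    by (rule sum.mono_neutral_cong_right) (use assms in \<open>auto simp: copies_sum_def\<close>)
  also have "\<dots> = (\<Sum>c\<in>{c\<in>C. (i, c) \<in> U}. ext_sgn {(i, c)} (U - {(i, c)}) * x (U - {(i, c)}))"
    by (subst sum.reindex) (auto intro: inj_onI)
  finally show ?thesis .
qed

lemma ext_sgn_singleton_below:
  assumes "\<And>g. g \<in> V \<Longrightarrow> i < fst g"
  shows "ext_sgn {(i, c)} V = 1"
proof -
  have no_inversions: "{(s, t). s = (i, c) \<and> t \<in> V \<and> t < s} = {}"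
    using assms by (fastforce simp: less_prod_def)
  show ?thesis
    unfolding ext_sgn_def singleton_iff no_inversions by simp
qed

lemma ext_mul_copies_sum_indicator:
  assumes indices_above: "\<And>V g. V \<in> \<V> \<Longrightarrow> g \<in> V \<Longrightarrow> i < fst g"
    and finite_members: "\<And>V. V \<in> \<V> \<Longrightarrow> finite V"
  shows "ext_mul (copies_sum i C) (\<lambda>V. of_bool (V \<in> \<V>)) U =
    of_bool (U \<in> (\<lambda>(c, V). insert (i, c) V) ` (C \<times> \<V>))"
proof (cases "U \<in> (\<lambda>(c, V). insert (i, c) V) ` (C \<times> \<V>)")
  case True
  then obtain c V where c: "c \<in> C" and V: "V \<in> \<V>" and U: "U = insert (i, c) V" by blast
  have "(i, c) \<notin> V" and only_c: "{c\<in>C. (i, c) \<in> U} = {c}"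
    using indices_above[OF V] c U by force+
  have "U - {(i, c)} = V"
    using U \<open>(i, c) \<notin> V\<close> by blast
  have "finite U"
    using U finite_members[OF V] by simp
  have "ext_mul (copies_sum i C) (\<lambda>V. of_bool (V \<in> \<V>)) U =
      ext_sgn {(i, c)} (U - {(i, c)}) * of_bool (U - {(i, c)} \<in> \<V>)"
    by (simp add: ext_mul_copies_sum[OF \<open>finite U\<close>] only_c)
  also have "\<dots> = ext_sgn {(i, c)} V"
    using \<open>U - {(i, c)} = V\<close> V by simp
  also have "\<dots> = 1"
    using indices_above[OF V] by (rule ext_sgn_singleton_below)
  finally show ?thesis
    using True by simp
next
  case False
  then have vanish: "of_bool (U - {(i, c)} \<in> \<V>) = (0::int)" if "c \<in> C" "(i, c) \<in> U" for c
    using that by (force simp: image_iff)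
  show ?thesis
  proof (cases "finite U")
    case True
    then show ?thesis
      using False vanish by (simp add: ext_mul_copies_sum)
  qed (use False in \<open>simp add: ext_mul_def\<close>)
qed

(* The monomials of the product of the copies_sum i_k C_k, k = 1..r *)
definition transversals :: "'i list \<Rightarrow> nat set list \<Rightarrow> 'i gen set set" where
  "transversals I Cs = {set (zip I us) |us. list_all2 (\<in>) us Cs}"

lemma transversals_Nil: "transversals [] [] = {{}}"
  by (simp add: transversals_def)

lemma transversals_Cons:
  "transversals (i # I) (C # Cs) = (\<lambda>(c, V). insert (i, c) V) ` (C \<times> transversals I Cs)"
proof (intro equalityI subsetI)
  fix U assume "U \<in> transversals (i # I) (C # Cs)"
  then obtain c us where "c \<in> C" "list_all2 (\<in>) us Cs" "U = insert (i, c) (set (zip I us))"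
    by (auto simp: transversals_def list_all2_Cons2)
  then show "U \<in> (\<lambda>(c, V). insert (i, c) V) ` (C \<times> transversals I Cs)"
    unfolding transversals_def by blast
next
  fix U assume "U \<in> (\<lambda>(c, V). insert (i, c) V) ` (C \<times> transversals I Cs)"
  then obtain c us where "c \<in> C" "list_all2 (\<in>) us Cs" "U = insert (i, c) (set (zip I us))"
    by (auto simp: transversals_def)
  then show "U \<in> transversals (i # I) (C # Cs)"
    unfolding transversals_def by (intro CollectI exI[of _ "c # us"]) simp
qed

lemma ext_prod_copies_sums:
  assumes "sorted_wrt (<) I" and "length Cs = length I"
  shows "ext_prod (map2 copies_sum I Cs) = (\<lambda>U. of_bool (U \<in> transversals I Cs))"
  using assms(2,1)
proof (induction Cs I rule: list_induct2)
  case Nil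
  show ?case
    by (simp add: ext_prod_def ext_one_def transversals_Nil fun_eq_iff)
next
  case (Cons C Cs i I)
  have indices_above: "i < fst g" if "V \<in> transversals I Cs" "g \<in> V" for V g
    using that Cons.prems by (cases g) (force simp: transversals_def dest: set_zip_leftD)
  have finite_members: "finite V" if "V \<in> transversals I Cs" for V
    using that by (auto simp: transversals_def)
  have "ext_prod (map2 copies_sum (i # I) (C # Cs)) =
      ext_mul (copies_sum i C) (ext_prod (map2 copies_sum I Cs))"
    by (simp add: ext_prod_def)
  also have "\<dots> = ext_mul (copies_sum i C) (\<lambda>V. of_bool (V \<in> transversals I Cs))"
    using Cons.IH Cons.prems by simp
  also have "\<dots> = (\<lambda>U. of_bool (U \<in> transversals (i # I) (C # Cs)))"
    unfolding transversals_Cons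
    by (rule ext, rule ext_mul_copies_sum_indicator) (use indices_above finite_members in blast)+
  finally show ?case .
qed

lemma set_zip_mem_transversals_iff:
  assumes "distinct I" and "length ts = length I" and "length Cs = length I"
  shows "set (zip I ts) \<in> transversals I Cs \<longleftrightarrow> list_all2 (\<in>) ts Cs"
proof
  assume "set (zip I ts) \<in> transversals I Cs"
  then obtain us where us: "list_all2 (\<in>) us Cs" and eq: "set (zip I ts) = set (zip I us)"
    by (auto simp: transversals_def)
  have "length us = length I"
    using us assms(3) by (simp add: list_all2_lengthD)
  then have "ts = us"
    using eq set_zip_eq_iff[OF assms(1,2)] by blast
  then show "list_all2 (\<in>) ts Cs"
    using us by simp
qed (auto simp: transversals_def)

definition wI_gens :: "'i list \<Rightarrow> bool list \<Rightarrow> 'i gen set" where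
  "wI_gens I eps = set (zip I (map of_bool eps))"

lemma wI_gens_eq_iff:
  assumes "distinct I" and "length eps = length I" and "length eps' = length I"
  shows "wI_gens I eps = wI_gens I eps' \<longleftrightarrow> eps = eps'"
  using assms set_zip_eq_iff[of I "map of_bool eps" "map of_bool eps'"]
  by (simp add: wI_gens_def inj_map_eq_map inj_def of_bool_eq_iff)

lemma wI_eq_indicator:
  assumes "sorted_wrt (<) I" and "length eps = length I"
  shows "wI I eps = (\<lambda>S. of_bool (S = wI_gens I eps))"
proof -
  have "wI I eps = ext_prod (map2 copies_sum I (map (\<lambda>e. {of_bool e}) eps))"
    by (simp add: wI_def zip_map2 ext_gen_eq_copies_sum of_bool_def split_def comp_def)
  moreover have "transversals I (map (\<lambda>e. {of_bool e}) eps) = {wI_gens I eps}"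
    by (simp add: transversals_def wI_gens_def list_all2_mem_singletons)
  ultimately show ?thesis
    using assms ext_prod_copies_sums[of I "map (\<lambda>e. {of_bool e}) eps"] by simp
qed

lemma SI_eq_indicator:
  assumes "sorted_wrt (<) I"
  shows "SI I = (\<lambda>S. of_bool (S \<in> wI_gens I ` {eps. length eps = length I}))"
proof -
  have "SI I = ext_prod (map2 copies_sum I (replicate (length I) {0, 1}))"
    by (simp add: SI_def zip_replicate2 ext_add_ext_gen_eq_copies_sum comp_def)
  moreover have "transversals I (replicate (length I) {0, 1}) = wI_gens I ` {eps. length eps = length I}"
    unfolding transversals_def wI_gens_def list_all2_replicate_0_1_iff by blast
  ultimately show ?thesis
    using assms ext_prod_copies_sums[of I "replicate (length I) {0, 1}"] by simp
qed

lemma chiI_wI_gens: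
  assumes "sorted_wrt (<) I" and "length eps = length I"
  shows "chiI I a (wI_gens I eps) = a eps"
proof -
  have "distinct I"
    using assms(1) by (simp add: strict_sorted_iff)
  have "a eps' * of_int (wI I eps' (wI_gens I eps)) = (if eps = eps' then a eps' else 0)"
    if "length eps' = length I" for eps'
    using wI_gens_eq_iff[OF \<open>distinct I\<close> assms(2) that]
    by (simp add: wI_eq_indicator[OF assms(1) that])
  then have "chiI I a (wI_gens I eps) =
      (\<Sum>eps'\<in>{eps'. length eps' = length I}. if eps = eps' then a eps' else 0)"
    unfolding chiI_def by (intro sum.cong) simp_all
  also have "\<dots> = a eps"
    using assms(2) by (simp add: finite_bool_lists_length)
  finally show ?thesis .
qed

lemma chiI_eq_0:
  assumes "sorted_wrt (<) I" and "S \<notin> wI_gens I ` {eps. length eps = length I}"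
  shows "chiI I a S = 0"
  unfolding chiI_def using assms by (intro sum.neutral) (auto simp: wI_eq_indicator)

lemma alg_map_chiI:
  assumes "sorted_wrt (<) I"
  shows "alg_map img (chiI I a) U =
    (\<Sum>eps | length eps = length I. a eps * of_int (ext_prod (map img (zip I (map of_bool eps))) U))"
proof -
  define E where "E = {eps :: bool list. length eps = length I}"
  define T where "T S = chiI I a S * of_int (ext_prod (map img (sorted_list_of_set S)) U)" for S
  have "distinct I"
    using assms by (simp add: strict_sorted_iff)
  have sorted_gens: "sorted_list_of_set (wI_gens I eps) = zip I (map of_bool eps)" for eps
    using assms by (simp add: wI_gens_def sorted_list_of_set_set_zip)
  have support: "{S. finite S \<and> chiI I a S \<noteq> 0} \<subseteq> wI_gens I ` E"
    using chiI_eq_0[OF assms] unfolding E_def by blast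
  have "alg_map img (chiI I a) U = sum T {S. finite S \<and> chiI I a S \<noteq> 0}"
    by (simp add: alg_map_def T_def)
  also have "\<dots> = sum T (wI_gens I ` E)"
    using support
    by (intro sum.mono_neutral_left) (auto simp: T_def E_def wI_gens_def finite_bool_lists_length)
  also have "\<dots> = sum (T \<circ> wI_gens I) E"
    using wI_gens_eq_iff[OF \<open>distinct I\<close>] by (intro sum.reindex inj_onI) (simp add: E_def)
  also have "\<dots> = (\<Sum>eps\<in>E. a eps * of_int (ext_prod (map img (zip I (map of_bool eps))) U))"
    using assms by (intro sum.cong) (simp_all add: T_def E_def chiI_wI_gens sorted_gens)
  finally show ?thesis
    by (simp add: E_def)
qed

lemma alg_map_copies_sums_chiI:
  assumes "sorted_wrt (<) I" and "length ts = length I"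
  shows "alg_map (\<lambda>g. copies_sum (fst g) (F (snd g))) (chiI I a) (set (zip I ts)) =
    (\<Sum>eps | length eps = length I. a eps * of_bool (list_all2 (\<lambda>t e. t \<in> F (of_bool e)) ts eps))"
proof -
  have "distinct I"
    using assms(1) by (simp add: strict_sorted_iff)
  have "ext_prod (map (\<lambda>g. copies_sum (fst g) (F (snd g))) (zip I (map of_bool eps))) (set (zip I ts)) =
      of_bool (list_all2 (\<lambda>t e. t \<in> F (of_bool e)) ts eps)" if "length eps = length I" for eps
  proof -
    have "map (\<lambda>g. copies_sum (fst g) (F (snd g))) (zip I (map of_bool eps)) =
        map2 copies_sum I (map (\<lambda>e. F (of_bool e)) eps)"
      by (simp add: zip_map2 comp_def split_def)
    then show ?thesis
      using assms that \<open>distinct I\<close>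
      by (simp add: ext_prod_copies_sums set_zip_mem_transversals_iff list_all2_map2)
  qed
  then show ?thesis
    unfolding alg_map_chiI[OF assms(1)] by (intro sum.cong) simp_all
qed

lemma alg_map_copies_sums_chiI_eq_coeff:
  assumes "sorted_wrt (<) I" and "length ts = length I"
    and reading: "\<And>t e. t \<in> set ts \<Longrightarrow> t \<in> F (of_bool e) \<longleftrightarrow> e = h t"
  shows "alg_map (\<lambda>g. copies_sum (fst g) (F (snd g))) (chiI I a) (set (zip I ts)) = a (map h ts)"
proof -
  have "list_all2 (\<lambda>t e. t \<in> F (of_bool e)) ts eps \<longleftrightarrow> eps = map h ts" for eps
    by (rule list_all2_iff_eq_map) (rule reading)
  then have "alg_map (\<lambda>g. copies_sum (fst g) (F (snd g))) (chiI I a) (set (zip I ts)) =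
      (\<Sum>eps | length eps = length I. if map h ts = eps then a eps else 0)"
    unfolding alg_map_copies_sums_chiI[OF assms(1,2)] by (intro sum.cong) auto
  also have "\<dots> = a (map h ts)"
    using assms(2) by (simp add: finite_bool_lists_length)
  finally show ?thesis .
qed

lemma alg_map_copies_sums_chiI_eq_0:
  assumes "sorted_wrt (<) I" and "length ts = length I"
    and "t \<in> set ts" and uncovered: "\<And>e. t \<notin> F (of_bool e)"
  shows "alg_map (\<lambda>g. copies_sum (fst g) (F (snd g))) (chiI I a) (set (zip I ts)) = 0"
proof -
  obtain k where "k < length ts" and "ts ! k = t"
    using assms(3) by (auto simp: in_set_conv_nth)
  then have "\<not> list_all2 (\<lambda>t e. t \<in> F (of_bool e)) ts eps" for eps
    using uncovered list_all2_nthD by blast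
  then show ?thesis
    unfolding alg_map_copies_sums_chiI[OF assms(1,2)] by simp
qed

lemma beta_map_chiI_at:
  assumes "sorted_wrt (<) I" and "length ts = length I" and "set ts \<subseteq> {0, 1, 2}"
  shows "beta_map (chiI I a) (set (zip I ts)) = a (map (\<lambda>t. t = 2) ts)"
  unfolding beta_img_eq_copies_sum
  by (rule alg_map_copies_sums_chiI_eq_coeff[OF assms(1,2)]) (use assms(3) in auto)

lemma gamma_map_chiI_at:
  assumes "sorted_wrt (<) I" and "length ts = length I" and "set ts \<subseteq> {0, 1, 2}"
  shows "gamma_map (chiI I a) (set (zip I ts)) = a (map (\<lambda>t. t \<noteq> 0) ts)"
  unfolding gamma_img_eq_copies_sum
  by (rule alg_map_copies_sums_chiI_eq_coeff[OF assms(1,2)]) (use assms(3) in auto)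

lemma delta_map_chiI_at_unprimed:
  assumes "sorted_wrt (<) I" and "length ts = length I" and "0 \<in> set ts"
  shows "delta_map (chiI I a) (set (zip I ts)) = 0"
  unfolding delta_img_eq_copies_sum
  by (rule alg_map_copies_sums_chiI_eq_0[OF assms]) auto

lemma beta_map_chiI_coeff:
  assumes "sorted_wrt (<) I" and "length eps = length I" and "c \<in> {0, 1}"
  shows "beta_map (chiI I a) (set (zip I (map (\<lambda>e. if e then 2 else c) eps))) = a eps"
proof -
  have "map (\<lambda>t. t = 2) (map (\<lambda>e. if e then 2 else c) eps) = eps"
    using assms(3) by (induction eps) auto
  then show ?thesis
    using beta_map_chiI_at[OF assms(1), of "map (\<lambda>e. if e then 2 else c) eps"] assms(2,3) by auto
qed

lemma chiI_eq_bscale_SI_if_beta_eq_gamma: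
  assumes I: "sorted_wrt (<) I" and "beta_map (chiI I a) = gamma_map (chiI I a)"
  shows "chiI I a = bscale (a (replicate (length I) True)) (SI I)"
proof -
  have coeff: "a eps = a (replicate (length I) True)" if "length eps = length I" for eps
  proof -
    define ts where "ts = map (\<lambda>e. if e then 2 else 1 :: nat) eps"
    have "map (\<lambda>t. t \<noteq> 0) ts = replicate (length eps) True"
      unfolding ts_def by (induction eps) auto
    moreover have "length ts = length I" and "set ts \<subseteq> {0, 1, 2}"
      using that by (auto simp: ts_def)
    moreover have "a eps = beta_map (chiI I a) (set (zip I ts))"
      using beta_map_chiI_coeff[OF I that, where a = a and c = 1] by (simp add: ts_def)
    ultimately show ?thesis
      using gamma_map_chiI_at[OF I, where a = a] assms(2) that by simp
  qed
  show ?thesis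
  proof
    fix S
    show "chiI I a S = bscale (a (replicate (length I) True)) (SI I) S"
    proof (cases "S \<in> wI_gens I ` {eps. length eps = length I}")
      case True
      then obtain eps where eps: "length eps = length I" and S: "S = wI_gens I eps"
        by blast
      have "chiI I a S = a (replicate (length I) True)"
        unfolding S chiI_wI_gens[OF I eps] by (rule coeff[OF eps])
      then show ?thesis
        using I True by (simp add: bscale_def SI_eq_indicator)
    qed (use I in \<open>simp add: chiI_eq_0 bscale_def SI_eq_indicator\<close>)
  qed
qed

lemma chiI_eq_0_if_beta_eq_0:
  assumes "sorted_wrt (<) I" and "beta_map (chiI I a) = (\<lambda>_. 0)"
  shows "chiI I a = (\<lambda>_. 0)"
proof -
  have "a eps = 0" if "length eps = length I" for eps
    using beta_map_chiI_coeff[OF assms(1) that, where a = a and c = 0] assms(2) by simp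
  then show ?thesis
    unfolding chiI_def by (intro ext sum.neutral) simp
qed

lemma in_B_1_LW_chiI_if_beta_eq_delta:
  assumes I: "sorted_wrt (<) I" and "beta_map (chiI I a) = delta_map (chiI I a)"
  shows "in_B_1_LW (chiI I a)"
  unfolding in_B_1_LW_def
proof (intro allI impI ballI)
  fix S g
  assume "chiI I a S \<noteq> 0" and "g \<in> S"
  then obtain eps where eps: "length eps = length I" and S: "S = wI_gens I eps"
    using chiI_eq_0[OF I] by blast
  have primed: "e" if "e \<in> set eps" for e
  proof (rule ccontr)
    assume "\<not> e"
    with that have "False \<in> set eps"
      by simp
    define ts where "ts = map (\<lambda>e. if e then 2 else 0 :: nat) eps"
    have "0 \<in> set ts"
      using \<open>False \<in> set eps\<close> unfolding ts_def by force
    have "a eps = beta_map (chiI I a) (set (zip I ts))"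
      using beta_map_chiI_coeff[OF I eps, where a = a and c = 0] by (simp add: ts_def)
    also have "\<dots> = delta_map (chiI I a) (set (zip I ts))"
      using assms(2) by simp
    also have "\<dots> = 0"
      using delta_map_chiI_at_unprimed[OF I _ \<open>0 \<in> set ts\<close>] eps by (simp add: ts_def)
    finally show False
      using \<open>chiI I a S \<noteq> 0\<close> chiI_wI_gens[OF I eps, where a = a] S by simp
  qed
  have "snd g \<in> set (map of_bool eps)"
    using \<open>g \<in> S\<close> S by (cases g) (auto simp: wI_gens_def dest: set_zip_rightD)
  then show "snd g = 1"
    by (auto dest: primed)
qed

(* All maps are B-linear with B acting on coefficients, so neither the grading of B
   nor r \<ge> 1 is needed. *)
theorem mainTheorem10:
  fixes Bd :: "nat \<Rightarrow> 'b::ring_1 set"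
    and I :: "'i::linorder list"
    and a :: "bool list \<Rightarrow> 'b"
  assumes "graded_comm_rat_alg Bd"
    and "sorted_wrt (<) I"
    and "length I \<ge> 1"
  shows "(beta_map (chiI I a) = gamma_map (chiI I a) \<longrightarrow> (\<exists>c::'b. chiI I a = bscale c (SI I)))
       \<and> (beta_map (chiI I a) = (\<lambda>_. 0) \<longrightarrow> chiI I a = (\<lambda>_. 0))
       \<and> (beta_map (chiI I a) = delta_map (chiI I a) \<longrightarrow> in_B_1_LW (chiI I a))"
proof (intro conjI impI)
  assume "beta_map (chiI I a) = gamma_map (chiI I a)"
  then show "\<exists>c. chiI I a = bscale c (SI I)"
    using chiI_eq_bscale_SI_if_beta_eq_gamma[OF assms(2)] by blast
next
  assume "beta_map (chiI I a) = (\<lambda>_. 0)"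
  then show "chiI I a = (\<lambda>_. 0)"
    by (rule chiI_eq_0_if_beta_eq_0[OF assms(2)])
next
  assume "beta_map (chiI I a) = delta_map (chiI I a)"
  then show "in_B_1_LW (chiI I a)"
    by (rule in_B_1_LW_chiI_if_beta_eq_delta[OF assms(2)])
qed

end
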